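(* Let $\mathcal P=\big((\{a\}\to\{a\searrow b\})^r_{<5}\big)^{lr}$, a class of continuous maps of topological spaces. Then: (1) a continuous map between normal Hausdorff ($T_4$) spaces lies in $\mathcal P$ iff it is proper (i.e. it is closed and the preimage of every point is compact); (2) a Hausdorff space $K$ is compact iff the map $K\to\{*\}$ lies in $\mathcal P$.
   Context: For morphisms $f:A\to B$ and $g:X\to Y$ in a category, write $f\rightthreetimes g$ ("$f$ has the left lifting property with respect to $g$") if for all morphisms $i:A\to X$, $j:B\to Y$ with $g\circ i=j\circ f$ there exists a morphism $h:B\to X$ with $h\circ f=i$ and $g\circ h=j$. For a class $C$ of morphisms, $C^l=\{f:\ f\rightthreetimes g\text{ for all }g\in C\}$, $C^r=\{g:\ f\rightthreetimes g\text{ for all }f\in C\}$, $C^{lr}=(C^l)^r$. For a class $C$ of continuous maps, $C_{<n}$ denotes the subclass of those maps whose domain and codomain are finite spaces with fewer than $n$ points. $\{a\searrow b\}$ is the Sierpiński space with open sets $\emptyset,\{a\},\{a,b\}$, and $\{a\}\to\{a\searrow b\}$ is the inclusion of the open point $a$; $\{*\}$ is the one-point space. *)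

theory Defs
  imports "HOL-Analysis.Analysis"
begin

text \<open>A morphism of Top is represented by a triple (X, Y, f) of topologies and a
  function, required to be a continuous map X to Y; equations between maps are
  only required on the underlying topspaces.\<close>

definition lifts ::
  "'a topology \<Rightarrow> 'b topology \<Rightarrow> ('a \<Rightarrow> 'b) \<Rightarrow>
   'c topology \<Rightarrow> 'd topology \<Rightarrow> ('c \<Rightarrow> 'd) \<Rightarrow> bool" where
  "lifts X Y f Z W g \<longleftrightarrow>
     (\<forall>i j. continuous_map X Z i \<and> continuous_map Y W j \<and>
            (\<forall>x\<in>topspace X. g (i x) = j (f x)) \<longrightarrow>
        (\<exists>h. continuous_map Y Z h \<and>
             (\<forall>x\<in>topspace X. h (f x) = i x) \<and>
             (\<forall>y\<in>topspace Y. g (h y) = j y)))"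

text \<open>The Sierpinski space {a \<searrow> b} with a = 0 (open point) and b = 1.\<close>
definition sierpinski :: "nat topology" where
  "sierpinski = topology (\<lambda>U. U = {} \<or> U = {0} \<or> U = {0, 1})"

definition point_a :: "nat topology" where
  "point_a = discrete_topology {0}"

text \<open>Membership in the class (({a} \<rightarrow> {a \<searrow> b})^r)_{<5}. Finite spaces with fewer
  than 5 points are represented (up to homeomorphism) by topologies on nat.\<close>
definition in_Cr5 :: "nat topology \<Rightarrow> nat topology \<Rightarrow> (nat \<Rightarrow> nat) \<Rightarrow> bool" where
  "in_Cr5 Z W g \<longleftrightarrow>
     continuous_map Z W g \<and>
     finite (topspace Z) \<and> card (topspace Z) < 5 \<and>
     finite (topspace W) \<and> card (topspace W) < 5 \<and>
     lifts point_a sierpinski id Z W g"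

definition in_Cr5l :: "'c topology \<Rightarrow> 'c topology \<Rightarrow> ('c \<Rightarrow> 'c) \<Rightarrow> bool" where
  "in_Cr5l A B u \<longleftrightarrow>
     continuous_map A B u \<and>
     (\<forall>Z W g. in_Cr5 Z W g \<longrightarrow> lifts A B u Z W g)"

text \<open>Membership in P = ((...)^r_{<5})^{lr}, where the maps of the left class
  that are tested against range over spaces carried by the type 'c.\<close>
definition in_P :: "'c itself \<Rightarrow> 'a topology \<Rightarrow> 'b topology \<Rightarrow> ('a \<Rightarrow> 'b) \<Rightarrow> bool" where
  "in_P (_ :: 'c itself) X Y f \<longleftrightarrow>
     continuous_map X Y f \<and>
     (\<forall>(A :: 'c topology) B u. in_Cr5l A B u \<longrightarrow> lifts A B u X Y f)"

definition star_space :: "unit topology" where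
  "star_space = discrete_topology UNIV"

end

(*
  Every map u : A -> B of the left class has dense image (lift against the inclusion of the
  closed point of the Sierpinski space) and separates disjoint closed sets C1, C2 of A: each
  point of B has a neighbourhood whose preimage misses C1 or C2 (lift against the map to a point
  from the three-point space whose nonempty open sets contain a common point).

  Given a lifting square for a proper map f of regular Hausdorff spaces, send b to the point of
  the fibre over j b lying in the closure of every i (u^-1 V), V a neighbourhood of b. Compactness
  of the fibre and closedness of f give such a point, separation and regularity make it unique
  and the resulting map continuous.

  Conversely, let f be in the class and let U be an ultrafilter on X whose image converges to y.
  Adjoin to X a point p whose neighbourhoods are the open sets of X belonging to U. Maps into a
  finite space are U-almost constant, so X -> X + {p} lies in the left class, and lifting it
  against f produces a limit of U in the fibre over y. Lifting ultrafilter limits in this way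
  makes f closed with compact fibres. Part (2) is the case of the map K -> {*}.
*)

theory Submission
  imports Defs
begin

section \<open>Lifting against maps of finite spaces\<close>

lemma liftsD:
  assumes "lifts A B u X Y f" "continuous_map A X i" "continuous_map B Y j"
    "\<And>a. a \<in> topspace A \<Longrightarrow> f (i a) = j (u a)"
  obtains h where "continuous_map B X h" "\<And>a. a \<in> topspace A \<Longrightarrow> h (u a) = i a"
    "\<And>b. b \<in> topspace B \<Longrightarrow> f (h b) = j b"
proof -
  have "\<exists>h. continuous_map B X h \<and> (\<forall>a\<in>topspace A. h (u a) = i a) \<and> (\<forall>b\<in>topspace B. f (h b) = j b)"
    using assms(1)[unfolded lifts_def, rule_format, of i j] assms(2-4) by blast
  then show ?thesis using that by blast
qed

lemma openin_sierpinski: "openin sierpinski U \<longleftrightarrow> U \<subseteq> {0, 1} \<and> (1 \<in> U \<longrightarrow> 0 \<in> U)"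
proof -
  have opens: "(\<lambda>U::nat set. U = {} \<or> U = {0} \<or> U = {0, 1}) =
      (\<lambda>U. U \<subseteq> {0, 1} \<and> (1 \<in> U \<longrightarrow> 0 \<in> U))"
  proof (intro ext iffI)
    fix U :: "nat set"
    assume "U \<subseteq> {0, 1} \<and> (1 \<in> U \<longrightarrow> 0 \<in> U)"
    then show "U = {} \<or> U = {0} \<or> U = {0, 1}" by (cases "0 \<in> U"; cases "1 \<in> U") blast+
  qed blast
  have "istopology (\<lambda>U::nat set. U \<subseteq> {0, 1} \<and> (1 \<in> U \<longrightarrow> 0 \<in> U))"
    unfolding istopology_def by blast
  then show ?thesis unfolding sierpinski_def opens by simp
qed

lemma topspace_sierpinski: "topspace sierpinski = {0, 1}"
  unfolding topspace_def openin_sierpinski by auto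

lemma topspace_point_a [simp]: "topspace point_a = {0}"
  by (simp add: point_a_def)

lemma lifts_point_sierpinski_specialization:
  assumes lifts: "lifts point_a sierpinski id Z W g"
    and z: "z \<in> topspace Z" and w: "w \<in> topspace W"
    and spec: "\<And>V. openin W V \<Longrightarrow> w \<in> V \<Longrightarrow> g z \<in> V"
  shows "\<exists>z'\<in>topspace Z. g z' = w \<and> (\<forall>Q. openin Z Q \<and> z' \<in> Q \<longrightarrow> z \<in> Q)"
proof -
  define j :: "nat \<Rightarrow> _" where "j n = (if n = 0 then g z else w)" for n
  have "continuous_map sierpinski W j"
    unfolding continuous_map_def
  proof (intro conjI allI impI)
    show "j \<in> topspace sierpinski \<rightarrow> topspace W"
      using w spec[of "topspace W"] by (auto simp: topspace_sierpinski j_def)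
    fix V assume "openin W V"
    then show "openin sierpinski {n \<in> topspace sierpinski. j n \<in> V}"
      using spec[of V] by (auto simp: openin_sierpinski topspace_sierpinski j_def)
  qed
  moreover have "continuous_map point_a Z (\<lambda>_. z)" using z by simp
  moreover have "\<forall>n\<in>topspace point_a. g z = j (id n)" by (simp add: j_def)
  ultimately obtain h where h: "continuous_map sierpinski Z h"
      "\<forall>n\<in>topspace point_a. h (id n) = z" "\<forall>n\<in>topspace sierpinski. g (h n) = j n"
    using lifts unfolding lifts_def by blast
  have "z \<in> Q" if "openin Z Q" "h 1 \<in> Q" for Q
  proof -
    have "openin sierpinski {n \<in> topspace sierpinski. h n \<in> Q}"
      using h(1) that(1) by (rule openin_continuous_map_preimage)
    then show ?thesis using h(2) that(2) by (auto simp: openin_sierpinski topspace_sierpinski)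
  qed
  moreover have "h 1 \<in> topspace Z" using h(1) by (auto simp: continuous_map_def topspace_sierpinski)
  moreover have "g (h 1) = w" using h(3) by (simp add: topspace_sierpinski j_def)
  ultimately show ?thesis by blast
qed

definition generic_point_space :: "nat topology" where
  "generic_point_space = topology (\<lambda>U. U \<subseteq> {0, 1, 2} \<and> (U \<noteq> {} \<longrightarrow> 0 \<in> U))"

lemma openin_generic_point_space:
  "openin generic_point_space U \<longleftrightarrow> U \<subseteq> {0, 1, 2} \<and> (U \<noteq> {} \<longrightarrow> 0 \<in> U)"
proof -
  have "istopology (\<lambda>U::nat set. U \<subseteq> {0, 1, 2} \<and> (U \<noteq> {} \<longrightarrow> 0 \<in> U))"
    unfolding istopology_def by blast
  then show ?thesis by (simp add: generic_point_space_def)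
qed

lemma topspace_generic_point_space: "topspace generic_point_space = {0, 1, 2}"
  unfolding topspace_def openin_generic_point_space by blast

lemma in_Cr5_closed_point: "in_Cr5 point_a sierpinski (\<lambda>_. 1)"
  unfolding in_Cr5_def lifts_def
proof (intro conjI allI impI)
  fix i j :: "nat \<Rightarrow> nat"
  assume ij: "continuous_map point_a point_a i \<and> continuous_map sierpinski sierpinski j \<and>
    (\<forall>n\<in>topspace point_a. 1 = j (id n))"
  then have j: "continuous_map sierpinski sierpinski j" and j0: "j 0 = 1" by auto
  have "j 1 = 1"
  proof (rule ccontr)
    assume "j 1 \<noteq> 1"
    then have "j 1 = 0" using j by (auto simp: continuous_map_def topspace_sierpinski)
    moreover have "openin sierpinski {n \<in> topspace sierpinski. j n \<in> {0}}"
      using j by (rule openin_continuous_map_preimage) (simp add: openin_sierpinski)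
    ultimately show False using j0 by (simp add: openin_sierpinski topspace_sierpinski)
  qed
  then have "\<forall>n\<in>topspace sierpinski. 1 = j n" using j0 by (auto simp: topspace_sierpinski)
  moreover have "\<forall>n\<in>topspace point_a. 0 = i n" using ij by (auto simp: continuous_map_def)
  ultimately show "\<exists>h. continuous_map sierpinski point_a h \<and> (\<forall>n\<in>topspace point_a. h (id n) = i n) \<and>
      (\<forall>n\<in>topspace sierpinski. 1 = j n)"
    by (intro exI[of _ "\<lambda>_. 0"]) (simp add: point_a_def)
qed (simp_all add: point_a_def topspace_sierpinski)

lemma in_Cr5_generic_point: "in_Cr5 generic_point_space point_a (\<lambda>_. 0)"
  unfolding in_Cr5_def lifts_def
proof (intro conjI allI impI)
  fix i j :: "nat \<Rightarrow> nat"
  assume ij: "continuous_map point_a generic_point_space i \<and> continuous_map sierpinski point_a j \<and>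
    (\<forall>n\<in>topspace point_a. 0 = j (id n))"
  then have "i 0 \<in> topspace generic_point_space" by (auto simp: continuous_map_def)
  moreover have "\<forall>n\<in>topspace sierpinski. 0 = j n" using ij by (auto simp: continuous_map_def)
  ultimately show "\<exists>h. continuous_map sierpinski generic_point_space h \<and>
      (\<forall>n\<in>topspace point_a. h (id n) = i n) \<and> (\<forall>n\<in>topspace sierpinski. 0 = j n)"
    by (intro exI[of _ "\<lambda>_. i 0"]) simp
qed (simp_all add: point_a_def topspace_generic_point_space)

lemma in_Cr5l_dense_image:
  assumes u: "in_Cr5l A B u" and V: "openin B V" "b \<in> V"
  shows "\<exists>a\<in>topspace A. u a \<in> V"
proof (rule ccontr)
  assume disj: "\<not> (\<exists>a\<in>topspace A. u a \<in> V)"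
  define j where "j y = (if y \<in> V then 0 else 1 :: nat)" for y
  have cj: "continuous_map B sierpinski j"
    unfolding continuous_map_def
  proof (intro conjI allI impI)
    fix W assume "openin sierpinski W"
    then have "{y \<in> topspace B. j y \<in> W} = (if 1 \<in> W then topspace B else if 0 \<in> W then V else {})"
      using openin_subset[OF V(1)] by (auto simp: openin_sierpinski j_def)
    then show "openin B {y \<in> topspace B. j y \<in> W}" using V(1) by simp
  qed (auto simp: j_def topspace_sierpinski)
  have "lifts A B u point_a sierpinski (\<lambda>_. 1)"
    using u in_Cr5_closed_point unfolding in_Cr5l_def by blast
  moreover have "continuous_map A point_a (\<lambda>_. 0)" by (simp add: point_a_def)
  moreover have "\<And>a. a \<in> topspace A \<Longrightarrow> 1 = j (u a)" using disj by (auto simp: j_def)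
  ultimately obtain h where j1: "\<And>y. y \<in> topspace B \<Longrightarrow> 1 = j y"
    using liftsD[of A B u point_a sierpinski "\<lambda>_. 1" "\<lambda>_. 0" j] cj by auto
  have "b \<in> topspace B" using openin_subset[OF V(1)] V(2) by blast
  then have "j b = 1" using j1 by simp
  then show False using V(2) by (simp add: j_def)
qed

lemma in_Cr5l_separates_closedin:
  assumes u: "in_Cr5l A B u" and C: "closedin A C1" "closedin A C2" "C1 \<inter> C2 = {}"
    and b: "b \<in> topspace B"
  shows "\<exists>V. openin B V \<and> b \<in> V \<and> ((\<forall>a\<in>C1. u a \<notin> V) \<or> (\<forall>a\<in>C2. u a \<notin> V))"
proof -
  define i where "i a = (if a \<in> C1 then 1 else if a \<in> C2 then 2 else 0 :: nat)" for a
  have C1A: "C1 \<subseteq> topspace A" and C2A: "C2 \<subseteq> topspace A" using C closedin_subset by auto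
  have "continuous_map A generic_point_space i"
    unfolding continuous_map_def
  proof (intro conjI allI impI)
    fix W assume "openin generic_point_space W"
    then have W: "W \<subseteq> {0, 1, 2}" "W \<noteq> {} \<Longrightarrow> 0 \<in> W" by (simp_all add: openin_generic_point_space)
    show "openin A {a \<in> topspace A. i a \<in> W}"
    proof (cases "W = {}")
      case False
      then have "{a \<in> topspace A. i a \<in> W} =
          topspace A - (if 1 \<in> W then {} else C1) - (if 2 \<in> W then {} else C2)"
        using W C(3) C1A C2A by (auto simp: i_def)
      then show ?thesis using C(1,2) by (auto intro!: openin_diff)
    qed simp
  qed (auto simp: i_def topspace_generic_point_space)
  moreover have "lifts A B u generic_point_space point_a (\<lambda>_. 0)"
    using u in_Cr5_generic_point unfolding in_Cr5l_def by blast
  ultimately obtain h where h: "continuous_map B generic_point_space h"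
    "\<And>a. a \<in> topspace A \<Longrightarrow> h (u a) = i a"
    using liftsD[of A B u generic_point_space point_a "\<lambda>_. 0" i "\<lambda>_. 0"] by (auto simp: point_a_def)
  define V where "V = {y \<in> topspace B. h y \<in> (if h b = 1 then {0, 1} else {0, 2})}"
  have "openin B V" unfolding V_def
    using h(1) by (rule openin_continuous_map_preimage) (simp add: openin_generic_point_space)
  moreover have "b \<in> V" using b h(1) by (auto simp: V_def continuous_map_def topspace_generic_point_space)
  moreover have "(\<forall>a\<in>C1. u a \<notin> V) \<or> (\<forall>a\<in>C2. u a \<notin> V)"
  proof (cases "h b = 1")
    case True
    have "h (u a) = 2" if "a \<in> C2" for a
    proof -
      have "a \<in> topspace A" "a \<notin> C1" using that C(3) C2A by auto
      then show ?thesis using h(2) that by (simp add: i_def)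
    qed
    then have "\<forall>a\<in>C2. u a \<notin> V" using True by (auto simp: V_def)
    then show ?thesis ..
  next
    case False
    have "h (u a) = 1" if "a \<in> C1" for a
    proof -
      have "a \<in> topspace A" using that C1A by auto
      then show ?thesis using h(2) that by (simp add: i_def)
    qed
    then have "\<forall>a\<in>C1. u a \<notin> V" using False by (auto simp: V_def)
    then show ?thesis ..
  qed
  ultimately show ?thesis by blast
qed

section \<open>Ultrafilters and proper maps\<close>

definition filter_on :: "'a set \<Rightarrow> 'a set set \<Rightarrow> bool" where
  "filter_on S F \<longleftrightarrow> F \<subseteq> Pow S \<and> S \<in> F \<and> {} \<notin> F \<and>
     (\<forall>A\<in>F. \<forall>B\<in>F. A \<inter> B \<in> F) \<and> (\<forall>A\<in>F. \<forall>B. A \<subseteq> B \<and> B \<subseteq> S \<longrightarrow> B \<in> F)"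

definition ultrafilter_on :: "'a set \<Rightarrow> 'a set set \<Rightarrow> bool" where
  "ultrafilter_on S U \<longleftrightarrow> filter_on S U \<and> (\<forall>A. A \<subseteq> S \<longrightarrow> A \<in> U \<or> S - A \<in> U)"

lemma filter_onI:
  assumes "F \<subseteq> Pow S" "S \<in> F" "{} \<notin> F" "\<And>A B. A \<in> F \<Longrightarrow> B \<in> F \<Longrightarrow> A \<inter> B \<in> F"
    "\<And>A B. A \<in> F \<Longrightarrow> A \<subseteq> B \<Longrightarrow> B \<subseteq> S \<Longrightarrow> B \<in> F"
  shows "filter_on S F"
  using assms unfolding filter_on_def by blast

lemma
  assumes "filter_on S F"
  shows filter_on_subset_Pow: "F \<subseteq> Pow S"
    and filter_on_top: "S \<in> F"
    and filter_on_empty: "{} \<notin> F"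
    and filter_on_Int: "A \<in> F \<Longrightarrow> B \<in> F \<Longrightarrow> A \<inter> B \<in> F"
    and filter_on_upward: "A \<in> F \<Longrightarrow> A \<subseteq> B \<Longrightarrow> B \<subseteq> S \<Longrightarrow> B \<in> F"
  using assms unfolding filter_on_def by blast+

lemma
  assumes "ultrafilter_on S U"
  shows ultrafilter_on_filter_on: "filter_on S U"
    and ultrafilter_on_Diff: "A \<subseteq> S \<Longrightarrow> A \<notin> U \<Longrightarrow> S - A \<in> U"
  using assms unfolding ultrafilter_on_def by blast+

lemma filter_on_Union_chain:
  assumes "\<C> \<noteq> {}" and F: "\<And>F. F \<in> \<C> \<Longrightarrow> filter_on S F" and "chain\<^sub>\<subseteq> \<C>"
  shows "filter_on S (\<Union>\<C>)"
proof (rule filter_onI)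
  fix A B assume "A \<in> \<Union>\<C>" "B \<in> \<Union>\<C>"
  then obtain F where "F \<in> \<C>" "A \<in> F" "B \<in> F"
    using assms(3) unfolding chain_subset_def by blast
  then show "A \<inter> B \<in> \<Union>\<C>" using F filter_on_Int by blast
next
  fix A B assume "A \<in> \<Union>\<C>" "A \<subseteq> B" "B \<subseteq> S"
  then show "B \<in> \<Union>\<C>" using F filter_on_upward by blast
qed (use assms(1) F filter_on_subset_Pow filter_on_top filter_on_empty in blast)+

lemma filter_on_adjoin:
  assumes F: "filter_on S F" and "A \<subseteq> S" "S - A \<notin> F"
  shows "filter_on S {B. B \<subseteq> S \<and> (\<exists>C\<in>F. C \<inter> A \<subseteq> B)}"
proof (rule filter_onI)
  show "{} \<notin> {B. B \<subseteq> S \<and> (\<exists>C\<in>F. C \<inter> A \<subseteq> B)}"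
  proof
    assume "{} \<in> {B. B \<subseteq> S \<and> (\<exists>C\<in>F. C \<inter> A \<subseteq> B)}"
    then obtain C where "C \<in> F" "C \<subseteq> S - A" using filter_on_subset_Pow[OF F] by blast
    then show False using filter_on_upward[OF F] assms(3) by blast
  qed
  fix B1 B2 assume "B1 \<in> {B. B \<subseteq> S \<and> (\<exists>C\<in>F. C \<inter> A \<subseteq> B)}" "B2 \<in> {B. B \<subseteq> S \<and> (\<exists>C\<in>F. C \<inter> A \<subseteq> B)}"
  then obtain C1 C2 where "C1 \<in> F" "C2 \<in> F" "C1 \<inter> A \<subseteq> B1" "C2 \<inter> A \<subseteq> B2" "B1 \<subseteq> S" "B2 \<subseteq> S"
    by blast
  moreover have "C1 \<inter> C2 \<in> F" using filter_on_Int[OF F] \<open>C1 \<in> F\<close> \<open>C2 \<in> F\<close> .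
  ultimately show "B1 \<inter> B2 \<in> {B. B \<subseteq> S \<and> (\<exists>C\<in>F. C \<inter> A \<subseteq> B)}" by blast
qed (use filter_on_top[OF F] in blast)+

lemma filter_on_imp_ultrafilter_on_superset:
  assumes "filter_on S F"
  shows "\<exists>U. ultrafilter_on S U \<and> F \<subseteq> U"
proof -
  let ?\<A> = "{G. filter_on S G \<and> F \<subseteq> G}"
  have "\<exists>M\<in>?\<A>. \<forall>G\<in>?\<A>. M \<subseteq> G \<longrightarrow> G = M"
  proof (rule subset_Zorn_nonempty)
    fix \<C> assume "\<C> \<noteq> {}" "subset.chain ?\<A> \<C>"
    then have "filter_on S (\<Union>\<C>)" "F \<subseteq> \<Union>\<C>"
      using filter_on_Union_chain[of \<C> S] unfolding subset.chain_def chain_subset_def by blast+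
    then show "\<Union>\<C> \<in> ?\<A>" by blast
  qed (use assms in blast)
  then obtain M where "M \<in> ?\<A>" and max: "\<forall>G\<in>?\<A>. M \<subseteq> G \<longrightarrow> G = M" ..
  then have M: "filter_on S M" "F \<subseteq> M" by simp_all
  have "A \<in> M \<or> S - A \<in> M" if "A \<subseteq> S" for A
  proof (rule disjCI)
    assume "S - A \<notin> M"
    let ?G = "{B. B \<subseteq> S \<and> (\<exists>C\<in>M. C \<inter> A \<subseteq> B)}"
    have "M \<subseteq> ?G" using filter_on_subset_Pow[OF M(1)] by blast
    moreover have "filter_on S ?G" using M(1) that \<open>S - A \<notin> M\<close> by (rule filter_on_adjoin)
    moreover have "F \<subseteq> ?G" using M(2) \<open>M \<subseteq> ?G\<close> by (rule order_trans)
    ultimately have "?G \<in> ?\<A>" by simp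
    then have "?G = M" using \<open>M \<subseteq> ?G\<close> by (rule bspec[OF max, THEN mp])
    moreover have "A \<in> ?G" using filter_on_top[OF M(1)] that by blast
    ultimately show "A \<in> M" by simp
  qed
  then show ?thesis using M unfolding ultrafilter_on_def by blast
qed

lemma filter_base_imp_ultrafilter_on_superset:
  assumes "\<B> \<subseteq> Pow S" "\<B> \<noteq> {}" "{} \<notin> \<B>" "\<And>A B. A \<in> \<B> \<Longrightarrow> B \<in> \<B> \<Longrightarrow> A \<inter> B \<in> \<B>"
  shows "\<exists>U. ultrafilter_on S U \<and> \<B> \<subseteq> U"
proof -
  let ?F = "{B. B \<subseteq> S \<and> (\<exists>A\<in>\<B>. A \<subseteq> B)}"
  have "filter_on S ?F"
  proof (rule filter_onI)
    fix B1 B2 assume "B1 \<in> ?F" "B2 \<in> ?F"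
    then obtain A1 A2 where "A1 \<in> \<B>" "A2 \<in> \<B>" "A1 \<subseteq> B1" "A2 \<subseteq> B2" "B1 \<subseteq> S" "B2 \<subseteq> S" by blast
    with assms(4)[of A1 A2] show "B1 \<inter> B2 \<in> ?F" by blast
  next
    fix B1 B2 assume "B1 \<in> ?F" "B1 \<subseteq> B2" "B2 \<subseteq> S"
    then obtain A where "A \<in> \<B>" "A \<subseteq> B1" by blast
    with \<open>B1 \<subseteq> B2\<close> \<open>B2 \<subseteq> S\<close> show "B2 \<in> ?F" by blast
  qed (use assms(1-3) in auto)
  then obtain U where U: "ultrafilter_on S U" "?F \<subseteq> U"
    using filter_on_imp_ultrafilter_on_superset by blast
  have "\<B> \<subseteq> ?F" using assms(1) by blast
  then show ?thesis using order_trans[OF _ U(2)] U(1) by blast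
qed

lemma ultrafilter_on_finite_partition:
  assumes U: "ultrafilter_on S U" and "finite Z" "{s \<in> S. \<phi> s \<in> Z} \<in> U"
  shows "\<exists>z\<in>Z. {s \<in> S. \<phi> s = z} \<in> U"
  using assms(2,3)
proof (induction Z rule: finite_induct)
  case empty
  then show ?case using filter_on_empty[OF ultrafilter_on_filter_on[OF U]] by simp
next
  case (insert z Z)
  show ?case
  proof (cases "{s \<in> S. \<phi> s = z} \<in> U")
    case False
    then have "S - {s \<in> S. \<phi> s = z} \<in> U" by (intro ultrafilter_on_Diff[OF U]) auto
    then have "{s \<in> S. \<phi> s \<in> insert z Z} \<inter> (S - {s \<in> S. \<phi> s = z}) \<in> U"
      by (rule filter_on_Int[OF ultrafilter_on_filter_on[OF U] insert.prems])
    moreover have "{s \<in> S. \<phi> s \<in> insert z Z} \<inter> (S - {s \<in> S. \<phi> s = z}) = {s \<in> S. \<phi> s \<in> Z}"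
      using insert.hyps(2) by blast
    ultimately show ?thesis using insert.IH by auto
  next
    case True
    then show ?thesis by blast
  qed
qed

definition limit_along :: "'a set set \<Rightarrow> 'a set \<Rightarrow> ('a \<Rightarrow> 'b) \<Rightarrow> 'b topology \<Rightarrow> 'b \<Rightarrow> bool" where
  "limit_along F S f Y y \<longleftrightarrow> y \<in> topspace Y \<and> (\<forall>V. openin Y V \<and> y \<in> V \<longrightarrow> {s \<in> S. f s \<in> V} \<in> F)"

lemma limit_along_cong:
  assumes "\<And>s. s \<in> S \<Longrightarrow> f s = g s"
  shows "limit_along F S f Y y \<longleftrightarrow> limit_along F S g Y y"
proof -
  have "{s \<in> S. f s \<in> V} = {s \<in> S. g s \<in> V}" for V using assms by auto
  then show ?thesis unfolding limit_along_def by simp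
qed

lemma limit_along_upward:
  assumes F: "filter_on S F" and "y \<in> topspace Y" "A \<in> F"
    and "\<And>V. openin Y V \<Longrightarrow> y \<in> V \<Longrightarrow> A \<subseteq> {s \<in> S. f s \<in> V}"
  shows "limit_along F S f Y y"
  unfolding limit_along_def
proof (intro conjI allI impI)
  fix V assume "openin Y V \<and> y \<in> V"
  then have "A \<subseteq> {s \<in> S. f s \<in> V}" using assms(4) by blast
  then show "{s \<in> S. f s \<in> V} \<in> F" by (rule filter_on_upward[OF F assms(3)]) auto
qed (rule assms(2))

lemma limit_along_id_in_closedin:
  assumes F: "filter_on (topspace X) F" and lim: "limit_along F (topspace X) id X x"
    and C: "closedin X C" "C \<in> F"
  shows "x \<in> C"
proof (rule ccontr)
  assume "x \<notin> C"
  then have "{s \<in> topspace X. id s \<in> topspace X - C} \<in> F"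
    using lim C(1) unfolding limit_along_def by blast
  then have "topspace X - C \<in> F" by (simp add: set_diff_eq)
  then have "(topspace X - C) \<inter> C \<in> F" using C(2) by (rule filter_on_Int[OF F])
  moreover have "(topspace X - C) \<inter> C = {}" by blast
  ultimately show False using filter_on_empty[OF F] by simp
qed

definition lifts_ultrafilter_limits :: "'a topology \<Rightarrow> 'b topology \<Rightarrow> ('a \<Rightarrow> 'b) \<Rightarrow> bool" where
  "lifts_ultrafilter_limits X Y f \<longleftrightarrow>
     (\<forall>U y. ultrafilter_on (topspace X) U \<and> limit_along U (topspace X) f Y y \<longrightarrow>
        (\<exists>x. f x = y \<and> limit_along U (topspace X) id X x))"

lemma ultrafilter_on_limit_along_closure_of:
  assumes f: "continuous_map X Y f" and CX: "C \<subseteq> topspace X" and y: "y \<in> Y closure_of (f ` C)"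
  shows "\<exists>U. ultrafilter_on (topspace X) U \<and> C \<in> U \<and> limit_along U (topspace X) f Y y"
proof -
  let ?\<B> = "(\<lambda>V. C \<inter> {x \<in> topspace X. f x \<in> V}) ` {V. openin Y V \<and> y \<in> V}"
  have yY: "y \<in> topspace Y" using y in_closure_of by fastforce
  have "?\<B> \<subseteq> Pow (topspace X)" using CX by blast
  moreover have "?\<B> \<noteq> {}" using yY by blast
  moreover have "{} \<notin> ?\<B>" using y CX unfolding in_closure_of by blast
  moreover have "A \<inter> B \<in> ?\<B>" if A: "A \<in> ?\<B>" and B: "B \<in> ?\<B>" for A B
  proof -
    obtain V where "A = C \<inter> {x \<in> topspace X. f x \<in> V}" "openin Y V \<and> y \<in> V"
      using A by auto
    moreover obtain W where "B = C \<inter> {x \<in> topspace X. f x \<in> W}" "openin Y W \<and> y \<in> W"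
      using B by auto
    ultimately show ?thesis by (intro image_eqI[where x="V \<inter> W"]) auto
  qed
  ultimately have "\<exists>U. ultrafilter_on (topspace X) U \<and> ?\<B> \<subseteq> U"
    by (rule filter_base_imp_ultrafilter_on_superset)
  then obtain U where U: "ultrafilter_on (topspace X) U" "?\<B> \<subseteq> U" by blast
  have UF: "filter_on (topspace X) U" using U(1) by (rule ultrafilter_on_filter_on)
  have "C \<inter> {x \<in> topspace X. f x \<in> topspace Y} \<in> U" using U(2) yY by blast
  moreover have "C \<inter> {x \<in> topspace X. f x \<in> topspace Y} = C"
    using CX continuous_map_image_subset_topspace[OF f] by auto
  moreover have "limit_along U (topspace X) f Y y"
    unfolding limit_along_def
  proof (intro conjI allI impI)
    fix V assume "openin Y V \<and> y \<in> V"
    then have "C \<inter> {x \<in> topspace X. f x \<in> V} \<in> U" using U(2) by blast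
    then show "{x \<in> topspace X. f x \<in> V} \<in> U" by (rule filter_on_upward[OF UF]) auto
  qed (rule yY)
  ultimately show ?thesis using U(1) by auto
qed

lemma closed_map_if_lifts_ultrafilter_limits:
  assumes f: "continuous_map X Y f" and lim: "lifts_ultrafilter_limits X Y f"
  shows "closed_map X Y f"
  unfolding closed_map_def
proof (intro allI impI)
  fix C assume C: "closedin X C"
  have CX: "C \<subseteq> topspace X" using C by (rule closedin_subset)
  have "y \<in> f ` C" if y: "y \<in> Y closure_of (f ` C)" for y
  proof -
    obtain U where U: "ultrafilter_on (topspace X) U" "C \<in> U" "limit_along U (topspace X) f Y y"
      using ultrafilter_on_limit_along_closure_of[OF f CX y] by blast
    then obtain x where x: "f x = y" "limit_along U (topspace X) id X x"
      using lim unfolding lifts_ultrafilter_limits_def by blast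
    have "x \<in> C" using ultrafilter_on_filter_on[OF U(1)] x(2) C U(2) by (rule limit_along_id_in_closedin)
    then show ?thesis using x(1) by blast
  qed
  moreover have "f ` C \<subseteq> topspace Y" using CX continuous_map_image_subset_topspace[OF f] by blast
  ultimately show "closedin Y (f ` C)" using closure_of_subset_eq by blast
qed

lemma compactin_fibre_if_lifts_ultrafilter_limits:
  assumes lim: "lifts_ultrafilter_limits X Y f" and y: "y \<in> topspace Y"
  shows "compactin X {x \<in> topspace X. f x = y}" (is "compactin X ?K")
  unfolding compactin_fip
proof (intro conjI allI impI)
  fix \<C> assume \<C>: "(\<forall>C\<in>\<C>. closedin X C) \<and> (\<forall>\<F>. finite \<F> \<and> \<F> \<subseteq> \<C> \<longrightarrow> ?K \<inter> \<Inter>\<F> \<noteq> {})"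
  let ?\<B> = "(\<lambda>\<F>. ?K \<inter> \<Inter>\<F>) ` {\<F>. finite \<F> \<and> \<F> \<subseteq> \<C>}"
  have KB: "?K \<in> ?\<B>" by (intro image_eqI[where x="{}"]) auto
  have "?\<B> \<subseteq> Pow (topspace X)" by blast
  moreover have "?\<B> \<noteq> {}" using KB by blast
  moreover have "{} \<notin> ?\<B>" using \<C> by auto
  moreover have "A \<inter> B \<in> ?\<B>" if A: "A \<in> ?\<B>" and B: "B \<in> ?\<B>" for A B
  proof -
    obtain \<F> where "A = ?K \<inter> \<Inter>\<F>" "finite \<F> \<and> \<F> \<subseteq> \<C>"
      using A by auto
    moreover obtain \<G> where "B = ?K \<inter> \<Inter>\<G>" "finite \<G> \<and> \<G> \<subseteq> \<C>"
      using B by auto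
    ultimately show ?thesis by (intro image_eqI[where x="\<F> \<union> \<G>"]) auto
  qed
  ultimately have "\<exists>U. ultrafilter_on (topspace X) U \<and> ?\<B> \<subseteq> U"
    by (rule filter_base_imp_ultrafilter_on_superset)
  then obtain U where U: "ultrafilter_on (topspace X) U" "?\<B> \<subseteq> U" by blast
  have UF: "filter_on (topspace X) U" using U(1) by (rule ultrafilter_on_filter_on)
  have KU: "?K \<in> U" using U(2) KB by blast
  have "limit_along U (topspace X) f Y y" using UF y KU by (rule limit_along_upward) auto
  then obtain x where x: "f x = y" "limit_along U (topspace X) id X x"
    using lim U(1) unfolding lifts_ultrafilter_limits_def by blast
  have "x \<in> C" if C: "C \<in> \<C>" for C
  proof (rule limit_along_id_in_closedin[OF UF x(2)])
    show "closedin X C" using \<C> C by blast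
    have "?K \<inter> \<Inter>{C} \<in> U" using U(2) C by blast
    then show "C \<in> U" by (rule filter_on_upward[OF UF]) (use \<open>closedin X C\<close> closedin_subset in auto)
  qed
  moreover have "x \<in> ?K" using x unfolding limit_along_def by simp
  ultimately show "?K \<inter> \<Inter>\<C> \<noteq> {}" by blast
qed auto

lemma proper_map_if_lifts_ultrafilter_limits:
  assumes "continuous_map X Y f" "lifts_ultrafilter_limits X Y f"
  shows "proper_map X Y f"
  unfolding proper_map_def
  using closed_map_if_lifts_ultrafilter_limits[OF assms] compactin_fibre_if_lifts_ultrafilter_limits[OF assms(2)]
  by blast

section \<open>Adjoining a limit point of an ultrafilter\<close>

text \<open>The space X with an extra point p whose open neighbourhoods are the sets
  insert p (e ` W) with W open in X and W \<in> U.\<close>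
locale ultrafilter_point_extension =
  fixes X :: "'a topology" and U :: "'a set set" and e :: "'a \<Rightarrow> 'c" and p :: 'c
  assumes ultrafilter: "ultrafilter_on (topspace X) U"
    and inj_e: "inj e" and p_notin_range: "p \<notin> range e"
begin

definition trace :: "'c set \<Rightarrow> 'a set" where
  "trace W = {x \<in> topspace X. e x \<in> W}"

definition opens :: "'c set \<Rightarrow> bool" where
  "opens W \<longleftrightarrow> W \<subseteq> insert p (e ` topspace X) \<and> openin X (trace W) \<and> (p \<in> W \<longrightarrow> trace W \<in> U)"

definition space :: "'c topology" where
  "space = topology opens"

definition subspace :: "'c topology" where
  "subspace = subtopology space (e ` topspace X)"

lemma filter: "filter_on (topspace X) U"
  using ultrafilter by (rule ultrafilter_on_filter_on)

lemma inv_e_e [simp]: "inv e (e x) = x"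
  using inj_e by simp

lemma e_neq_p [simp]: "e x \<noteq> p" "p \<noteq> e x"
  using p_notin_range by auto

lemma e_eq_iff [simp]: "e x = e y \<longleftrightarrow> x = y"
  using inj_e by (simp add: inj_eq)

lemma istopology_opens: "istopology opens"
  unfolding istopology_def
proof (intro conjI allI impI)
  fix V W assume V: "opens V" and W: "opens W"
  have "trace (V \<inter> W) = trace V \<inter> trace W" by (auto simp: trace_def)
  moreover have "trace V \<inter> trace W \<in> U" if "p \<in> V \<inter> W"
    using V W that filter_on_Int[OF filter] unfolding opens_def by blast
  ultimately show "opens (V \<inter> W)" using V W unfolding opens_def by auto
next
  fix \<W> assume \<W>: "\<forall>W\<in>\<W>. opens W"
  have "trace (\<Union>\<W>) = (\<Union>W\<in>\<W>. trace W)" by (auto simp: trace_def)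
  moreover have "trace (\<Union>\<W>) \<in> U" if p: "p \<in> \<Union>\<W>"
  proof -
    obtain W where "W \<in> \<W>" "p \<in> W" using p by blast
    then have "trace W \<in> U" using \<W> unfolding opens_def by blast
    then show ?thesis by (rule filter_on_upward[OF filter]) (use \<open>W \<in> \<W>\<close> in \<open>auto simp: trace_def\<close>)
  qed
  ultimately show "opens (\<Union>\<W>)" using \<W> unfolding opens_def by auto
qed

lemma openin_space: "openin space W \<longleftrightarrow> opens W"
  by (simp add: space_def istopology_opens)

lemma topspace_space: "topspace space = insert p (e ` topspace X)"
proof -
  have "trace (insert p (e ` topspace X)) = topspace X" by (auto simp: trace_def)
  then have "opens (insert p (e ` topspace X))"
    using filter_on_top[OF filter] unfolding opens_def by simp
  then show ?thesis unfolding topspace_def openin_space opens_def by blast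
qed

lemma topspace_subspace: "topspace subspace = e ` topspace X"
  by (auto simp: subspace_def topspace_space)

lemma openin_space_image:
  assumes "openin X Q"
  shows "openin space (e ` Q)"
proof -
  have "Q \<subseteq> topspace X" using assms by (rule openin_subset)
  moreover from this have "trace (e ` Q) = Q" using inj_e by (auto simp: trace_def inj_image_mem_iff)
  ultimately show ?thesis using assms unfolding openin_space opens_def by auto
qed

lemma continuous_map_e: "continuous_map X subspace e"
  unfolding subspace_def
proof (rule continuous_map_into_subtopology)
  show "continuous_map X space e"
    unfolding continuous_map_def
  proof (intro conjI allI impI)
    fix W assume "openin space W"
    then show "openin X {x \<in> topspace X. e x \<in> W}"
      unfolding openin_space opens_def trace_def by blast
  qed (auto simp: topspace_space)
qed auto

lemma continuous_map_inv_e: "continuous_map subspace X (inv e)"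
  unfolding continuous_map_def
proof (intro conjI allI impI)
  fix Q assume Q: "openin X Q"
  then have "{c \<in> topspace subspace. inv e c \<in> Q} = e ` Q \<inter> e ` topspace X"
    using openin_subset[OF Q] by (auto simp: topspace_subspace)
  then show "openin subspace {c \<in> topspace subspace. inv e c \<in> Q}"
    unfolding subspace_def openin_subtopology using openin_space_image[OF Q] by blast
qed (auto simp: topspace_subspace)

lemma continuous_map_extension:
  assumes \<phi>: "continuous_map X Z \<phi>" and lim: "limit_along U (topspace X) \<phi> Z z"
  shows "continuous_map space Z (\<lambda>c. if c = p then z else \<phi> (inv e c))"
  unfolding continuous_map_def
proof (intro conjI allI impI)
  show "(\<lambda>c. if c = p then z else \<phi> (inv e c)) \<in> topspace space \<rightarrow> topspace Z"
    using \<phi> lim by (auto simp: topspace_space continuous_map_def limit_along_def)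
  fix Q assume Q: "openin Z Q"
  let ?W = "{c \<in> topspace space. (if c = p then z else \<phi> (inv e c)) \<in> Q}"
  have tr: "trace ?W = {x \<in> topspace X. \<phi> x \<in> Q}" by (auto simp: trace_def topspace_space)
  have "openin X (trace ?W)" unfolding tr using \<phi> Q by (rule openin_continuous_map_preimage)
  moreover have "trace ?W \<in> U" if "p \<in> ?W"
    using that Q lim unfolding tr limit_along_def by auto
  ultimately show "openin space ?W" unfolding openin_space opens_def topspace_space by auto
qed

lemma limit_along_continuous_map:
  assumes k: "continuous_map space Z k"
  shows "limit_along U (topspace X) (k \<circ> e) Z (k p)"
  unfolding limit_along_def
proof (intro conjI allI impI)
  show "k p \<in> topspace Z" using k by (auto simp: continuous_map_def topspace_space)
  fix Q assume Q: "openin Z Q \<and> k p \<in> Q"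
  then have "openin space {c \<in> topspace space. k c \<in> Q}"
    using k by (auto intro: openin_continuous_map_preimage)
  moreover have "p \<in> {c \<in> topspace space. k c \<in> Q}" using Q by (simp add: topspace_space)
  ultimately have "trace {c \<in> topspace space. k c \<in> Q} \<in> U" unfolding openin_space opens_def by blast
  moreover have "trace {c \<in> topspace space. k c \<in> Q} = {x \<in> topspace X. (k \<circ> e) x \<in> Q}"
    by (auto simp: trace_def topspace_space)
  ultimately show "{x \<in> topspace X. (k \<circ> e) x \<in> Q} \<in> U" by simp
qed

text \<open>Since Z is finite, i \<circ> e is U-almost constant with value z0; lifting against
  {a} \<rightarrow> {a \<searrow> b} replaces z0 by a point over j p that specializes to z0.\<close>
lemma in_Cr5_lifts_limit:
  assumes g: "in_Cr5 Z W g" and i: "continuous_map subspace Z i" and j: "continuous_map space W j"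
    and comm: "\<And>c. c \<in> topspace subspace \<Longrightarrow> g (i c) = j c"
  shows "\<exists>z. g z = j p \<and> limit_along U (topspace X) (i \<circ> e) Z z"
proof -
  have ie: "continuous_map X Z (i \<circ> e)" using continuous_map_e i by (rule continuous_map_compose)
  have "{x \<in> topspace X. (i \<circ> e) x \<in> topspace Z} = topspace X"
    using continuous_map_image_subset_topspace[OF ie] by auto
  then have "{x \<in> topspace X. (i \<circ> e) x \<in> topspace Z} \<in> U" using filter_on_top[OF filter] by simp
  then obtain z0 where z0: "z0 \<in> topspace Z" and E: "{x \<in> topspace X. (i \<circ> e) x = z0} \<in> U"
    using ultrafilter_on_finite_partition[OF ultrafilter] g unfolding in_Cr5_def by blast
  have "g z0 \<in> V" if V: "openin W V" "j p \<in> V" for V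
  proof -
    have "{x \<in> topspace X. (j \<circ> e) x \<in> V} \<in> U"
      using limit_along_continuous_map[OF j] V unfolding limit_along_def by blast
    then have "{x \<in> topspace X. (j \<circ> e) x \<in> V} \<inter> {x \<in> topspace X. (i \<circ> e) x = z0} \<in> U"
      using E by (rule filter_on_Int[OF filter])
    then have "{x \<in> topspace X. (j \<circ> e) x \<in> V} \<inter> {x \<in> topspace X. (i \<circ> e) x = z0} \<noteq> {}"
      using filter_on_empty[OF filter] by metis
    then obtain x where "x \<in> topspace X" "j (e x) \<in> V" "i (e x) = z0" by auto
    moreover have "g (i (e x)) = j (e x)" using comm \<open>x \<in> topspace X\<close> by (simp add: topspace_subspace)
    ultimately show ?thesis by simp
  qed
  moreover have "j p \<in> topspace W" using j by (auto simp: continuous_map_def topspace_space)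
  ultimately obtain z where z: "z \<in> topspace Z" "g z = j p"
    and spec: "\<forall>Q. openin Z Q \<and> z \<in> Q \<longrightarrow> z0 \<in> Q"
    using lifts_point_sierpinski_specialization[of Z W g z0 "j p"] g z0 unfolding in_Cr5_def by blast
  have "limit_along U (topspace X) (i \<circ> e) Z z"
    using filter z(1) E by (rule limit_along_upward) (use spec in blast)
  with z(2) show ?thesis by blast
qed

lemma in_Cr5l_inclusion: "in_Cr5l subspace space id"
  unfolding in_Cr5l_def lifts_def
proof (intro conjI allI impI)
  show "continuous_map subspace space id" by (simp add: subspace_def)
  fix Z W g i j
  assume g: "in_Cr5 Z W g"
    and ij: "continuous_map subspace Z i \<and> continuous_map space W j \<and> (\<forall>c\<in>topspace subspace. g (i c) = j (id c))"
  then have i: "continuous_map subspace Z i" and "continuous_map space W j"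
    and "\<And>c. c \<in> topspace subspace \<Longrightarrow> g (i c) = j c" by auto
  then obtain z where z: "g z = j p" "limit_along U (topspace X) (i \<circ> e) Z z"
    using in_Cr5_lifts_limit[OF g] by blast
  let ?h = "\<lambda>c. if c = p then z else (i \<circ> e) (inv e c)"
  have "continuous_map space Z ?h"
    using continuous_map_compose[OF continuous_map_e i] z(2) by (rule continuous_map_extension)
  moreover have "\<forall>c\<in>topspace subspace. ?h (id c) = i c" by (auto simp: topspace_subspace)
  moreover have "\<forall>c\<in>topspace space. g (?h c) = j c" using ij z(1) by (auto simp: topspace_space topspace_subspace)
  ultimately show "\<exists>h. continuous_map space Z h \<and> (\<forall>c\<in>topspace subspace. h (id c) = i c) \<and>
      (\<forall>c\<in>topspace space. g (h c) = j c)" by blast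
qed

lemma in_P_lifts_limit:
  assumes P: "in_P TYPE('c) X Y f" and lim: "limit_along U (topspace X) f Y y"
  shows "\<exists>x. f x = y \<and> limit_along U (topspace X) id X x"
proof -
  have f: "continuous_map X Y f" using P unfolding in_P_def by blast
  let ?j = "\<lambda>c. if c = p then y else f (inv e c)"
  have "lifts subspace space id X Y f" using P in_Cr5l_inclusion unfolding in_P_def by blast
  moreover have "continuous_map space Y ?j" using f lim by (rule continuous_map_extension)
  moreover have "\<forall>c\<in>topspace subspace. f (inv e c) = ?j (id c)" by (auto simp: topspace_subspace)
  ultimately obtain h where h: "continuous_map space X h" "\<forall>c\<in>topspace subspace. h (id c) = inv e c"
      "\<forall>c\<in>topspace space. f (h c) = ?j c"
    using continuous_map_inv_e unfolding lifts_def by blast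
  have "f (h p) = y" using h(3) by (simp add: topspace_space)
  moreover have "limit_along U (topspace X) (h \<circ> e) X (h p)" using h(1) by (rule limit_along_continuous_map)
  then have "limit_along U (topspace X) id X (h p)"
    using h(2) by (subst limit_along_cong[where g = "h \<circ> e"]) (auto simp: topspace_subspace)
  ultimately show ?thesis by blast
qed

end

lemma lifts_ultrafilter_limits_if_in_P:
  fixes X :: "'a topology"
  assumes P: "in_P TYPE(('a + 'e) set set) X Y f"
  shows "lifts_ultrafilter_limits X Y f"
  unfolding lifts_ultrafilter_limits_def
proof (intro allI impI, elim conjE)
  fix U y assume U: "ultrafilter_on (topspace X) U" and lim: "limit_along U (topspace X) f Y y"
  interpret ultrafilter_point_extension X U "\<lambda>x. {{Inl x}}" "{}"
    using U by unfold_locales (auto simp: inj_def)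
  show "\<exists>x. f x = y \<and> limit_along U (topspace X) id X x" using P lim by (rule in_P_lifts_limit)
qed

section \<open>Proper maps lift against the left class\<close>

text \<open>A lift h of a square with sides u, i must send b into the cluster set of i along u at b.\<close>
definition cluster_set ::
  "'c topology \<Rightarrow> 'd topology \<Rightarrow> ('c \<Rightarrow> 'd) \<Rightarrow> 'a topology \<Rightarrow> ('c \<Rightarrow> 'a) \<Rightarrow> 'd \<Rightarrow> 'a set" where
  "cluster_set A B u X i b =
     {x \<in> topspace X. \<forall>V. openin B V \<and> b \<in> V \<longrightarrow> x \<in> X closure_of (i ` {a \<in> topspace A. u a \<in> V})}"

lemma image_in_cluster_set:
  assumes i: "continuous_map A X i" and a: "a \<in> topspace A"
  shows "i a \<in> cluster_set A B u X i (u a)"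
  unfolding cluster_set_def
proof (intro CollectI conjI allI impI)
  have sub: "i ` {a \<in> topspace A. u a \<in> V} \<subseteq> topspace X" for V
    using continuous_map_image_subset_topspace[OF i] by blast
  show "i a \<in> topspace X" using sub[of UNIV] a by blast
  fix V assume "openin B V \<and> u a \<in> V"
  then have "i a \<in> i ` {a \<in> topspace A. u a \<in> V}" using a by blast
  then show "i a \<in> X closure_of (i ` {a \<in> topspace A. u a \<in> V})" using closure_of_subset[OF sub] by blast
qed

lemma cluster_set_subsingleton:
  assumes reg: "regular_space X" and T2: "Hausdorff_space X" and u: "in_Cr5l A B u"
    and i: "continuous_map A X i" and b: "b \<in> topspace B"
    and x: "x \<in> cluster_set A B u X i b" and x': "x' \<in> cluster_set A B u X i b"
  shows "x = x'"
proof (rule ccontr)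
  assume "x \<noteq> x'"
  moreover have "x \<in> topspace X" "x' \<in> topspace X" using x x' by (auto simp: cluster_set_def)
  ultimately obtain W W' where W: "openin X W" "openin X W'" "x \<in> W" "x' \<in> W'" "disjnt W W'"
    using T2 unfolding Hausdorff_space_def by blast
  have base: "neighbourhood_base_of (closedin X) X" using reg by (simp add: neighbourhood_base_of_closedin)
  obtain N K where N: "openin X N" "closedin X K" "x \<in> N" "N \<subseteq> K" "K \<subseteq> W"
    using base[unfolded neighbourhood_base_of, rule_format, OF conjI[OF W(1,3)]] by blast
  obtain N' K' where N': "openin X N'" "closedin X K'" "x' \<in> N'" "N' \<subseteq> K'" "K' \<subseteq> W'"
    using base[unfolded neighbourhood_base_of, rule_format, OF conjI[OF W(2,4)]] by blast
  have C: "closedin A {a \<in> topspace A. i a \<in> K}" and C': "closedin A {a \<in> topspace A. i a \<in> K'}"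
    using i N(2) N'(2) by (auto intro: closedin_continuous_map_preimage)
  have disj: "{a \<in> topspace A. i a \<in> K} \<inter> {a \<in> topspace A. i a \<in> K'} = {}"
    using N(5) N'(5) W(5) by (auto simp: disjnt_def)
  obtain V where V: "openin B V" "b \<in> V"
    and sep: "(\<forall>a\<in>{a \<in> topspace A. i a \<in> K}. u a \<notin> V) \<or> (\<forall>a\<in>{a \<in> topspace A. i a \<in> K'}. u a \<notin> V)"
    using in_Cr5l_separates_closedin[OF u C C' disj b] by blast
  have meets: "\<exists>a\<in>topspace A. u a \<in> V \<and> i a \<in> M"
    if "y \<in> cluster_set A B u X i b" "openin X M" "y \<in> M" for y M
  proof -
    have "y \<in> X closure_of (i ` {a \<in> topspace A. u a \<in> V})"
      using that(1) V by (auto simp: cluster_set_def)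
    then show ?thesis using that(2,3) unfolding in_closure_of by blast
  qed
  obtain a where "a \<in> topspace A" "u a \<in> V" "i a \<in> K" using meets[OF x N(1,3)] N(4) by blast
  moreover obtain a' where "a' \<in> topspace A" "u a' \<in> V" "i a' \<in> K'" using meets[OF x' N'(1,3)] N'(4) by blast
  ultimately show False using sep by blast
qed

lemma directed_finite_lower_bound:
  assumes "\<S> \<noteq> {}" and directed: "\<And>S T. S \<in> \<S> \<Longrightarrow> T \<in> \<S> \<Longrightarrow> \<exists>R\<in>\<S>. R \<subseteq> S \<inter> T"
    and "finite \<G>" "\<G> \<subseteq> \<S>"
  shows "\<exists>R\<in>\<S>. R \<subseteq> \<Inter>\<G>"
  using assms(3,4)
proof (induction \<G> rule: finite_induct)
  case empty
  then show ?case using assms(1) by blast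
next
  case (insert S \<G>)
  then obtain R where "R \<in> \<S>" "R \<subseteq> \<Inter>\<G>" by blast
  moreover obtain R' where "R' \<in> \<S>" "R' \<subseteq> S \<inter> R" using directed insert.prems \<open>R \<in> \<S>\<close> by blast
  ultimately show ?case by blast
qed

lemma proper_map_cluster_point:
  assumes f: "proper_map X Y f" and y: "y \<in> topspace Y"
    and \<S>: "\<S> \<noteq> {}" "\<And>S. S \<in> \<S> \<Longrightarrow> S \<noteq> {}" "\<And>S. S \<in> \<S> \<Longrightarrow> S \<subseteq> topspace X"
    and directed: "\<And>S T. S \<in> \<S> \<Longrightarrow> T \<in> \<S> \<Longrightarrow> \<exists>R\<in>\<S>. R \<subseteq> S \<inter> T"
    and conv: "\<And>V. openin Y V \<Longrightarrow> y \<in> V \<Longrightarrow> \<exists>S\<in>\<S>. f ` S \<subseteq> V"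
  shows "\<exists>x\<in>topspace X. f x = y \<and> (\<forall>S\<in>\<S>. x \<in> X closure_of S)"
proof -
  let ?K = "{x \<in> topspace X. f x = y}"
  have meets: "?K \<inter> X closure_of R \<noteq> {}" if R: "R \<in> \<S>" for R
  proof
    assume empty: "?K \<inter> X closure_of R = {}"
    have "closedin Y (f ` (X closure_of R))"
      using proper_imp_closed_map[OF f] closedin_closure_of unfolding closed_map_def by blast
    moreover have "y \<notin> f ` (X closure_of R)" using empty closure_of_subset_topspace by fastforce
    ultimately have "openin Y (topspace Y - f ` (X closure_of R))" "y \<in> topspace Y - f ` (X closure_of R)"
      using y by auto
    then obtain S where "S \<in> \<S>" "f ` S \<subseteq> topspace Y - f ` (X closure_of R)" using conv by blast
    moreover obtain R' where "R' \<in> \<S>" "R' \<subseteq> S \<inter> R" using directed \<open>S \<in> \<S>\<close> R by blast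
    moreover have "R \<subseteq> X closure_of R" using \<S>(3)[OF R] by (rule closure_of_subset)
    ultimately show False using \<S>(2) by blast
  qed
  have "compactin X ?K" using f y unfolding proper_map_def by blast
  then have "?K \<inter> \<Inter>((\<lambda>S. X closure_of S) ` \<S>) \<noteq> {}"
    unfolding compactin_fip
  proof (elim conjE allE impE, intro conjI allI impI)
    fix \<F> assume "finite \<F> \<and> \<F> \<subseteq> (\<lambda>S. X closure_of S) ` \<S>"
    then obtain \<G> where \<G>: "\<G> \<subseteq> \<S>" "finite \<G>" "\<F> = (\<lambda>S. X closure_of S) ` \<G>"
      by (meson finite_subset_image)
    obtain R where R: "R \<in> \<S>" "R \<subseteq> \<Inter>\<G>"
      using directed_finite_lower_bound[OF \<S>(1) directed \<G>(2,1)] by blast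
    have "X closure_of R \<subseteq> X closure_of G" if "G \<in> \<G>" for G
      using R(2) that by (intro closure_of_mono) blast
    then have "X closure_of R \<subseteq> \<Inter>\<F>" using \<G>(3) by blast
    then show "?K \<inter> \<Inter>\<F> \<noteq> {}" using meets[OF R(1)] by blast
  qed auto
  then show ?thesis by blast
qed

lemma cluster_set_meets_closedin:
  assumes f: "proper_map X Y f" and i: "continuous_map A X i" and j: "continuous_map B Y j"
    and comm: "\<And>a. a \<in> topspace A \<Longrightarrow> f (i a) = j (u a)"
    and b: "b \<in> topspace B" and C: "closedin X C"
    and meets: "\<And>V. openin B V \<Longrightarrow> b \<in> V \<Longrightarrow> i ` {a \<in> topspace A. u a \<in> V} \<inter> C \<noteq> {}"
  shows "\<exists>x\<in>C. x \<in> cluster_set A B u X i b \<and> f x = j b"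
proof -
  define S where "S V = i ` {a \<in> topspace A. u a \<in> V} \<inter> C" for V
  have CX: "C \<subseteq> topspace X" using C by (rule closedin_subset)
  have "\<exists>x\<in>topspace X. f x = j b \<and> (\<forall>T\<in>S ` {V. openin B V \<and> b \<in> V}. x \<in> X closure_of T)"
  proof (rule proper_map_cluster_point[OF f])
    show "j b \<in> topspace Y" using j b by (auto simp: continuous_map_def)
    show "S ` {V. openin B V \<and> b \<in> V} \<noteq> {}" using b by blast
    show "T \<noteq> {}" if "T \<in> S ` {V. openin B V \<and> b \<in> V}" for T using that meets by (auto simp: S_def)
    show "T \<subseteq> topspace X" if "T \<in> S ` {V. openin B V \<and> b \<in> V}" for T using that CX by (auto simp: S_def)
  next
    fix T T' assume "T \<in> S ` {V. openin B V \<and> b \<in> V}" "T' \<in> S ` {V. openin B V \<and> b \<in> V}"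
    then obtain V V' where "T = S V" "T' = S V'" "openin B V" "b \<in> V" "openin B V'" "b \<in> V'" by blast
    then have "S (V \<inter> V') \<in> S ` {V. openin B V \<and> b \<in> V}" by (intro imageI) auto
    moreover have "S (V \<inter> V') \<subseteq> T \<inter> T'" using \<open>T = S V\<close> \<open>T' = S V'\<close> by (auto simp: S_def)
    ultimately show "\<exists>R\<in>S ` {V. openin B V \<and> b \<in> V}. R \<subseteq> T \<inter> T'" by blast
  next
    fix W assume W: "openin Y W" "j b \<in> W"
    then have "openin B {b' \<in> topspace B. j b' \<in> W}" using j by (auto intro: openin_continuous_map_preimage)
    moreover have "f ` S {b' \<in> topspace B. j b' \<in> W} \<subseteq> W" using comm by (auto simp: S_def)
    ultimately show "\<exists>T\<in>S ` {V. openin B V \<and> b \<in> V}. f ` T \<subseteq> W" using W(2) b by blast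
  qed
  then obtain x where x: "x \<in> topspace X" "f x = j b"
    and cl: "\<And>V. openin B V \<Longrightarrow> b \<in> V \<Longrightarrow> x \<in> X closure_of S V" by blast
  have "x \<in> X closure_of S (topspace B)" using cl b by simp
  then have "x \<in> C" using closure_of_minimal[OF _ C, of "S (topspace B)"] by (auto simp: S_def)
  moreover have "x \<in> X closure_of (i ` {a \<in> topspace A. u a \<in> V})" if "openin B V" "b \<in> V" for V
    using cl[OF that] unfolding S_def by (rule subsetD[OF closure_of_mono[OF Int_lower1]])
  then have "x \<in> cluster_set A B u X i b" using x(1) by (simp add: cluster_set_def)
  ultimately show ?thesis using x(2) by blast
qed

lemma cluster_set_subset_openin_imp_eventually:
  assumes f: "proper_map X Y f" and i: "continuous_map A X i" and j: "continuous_map B Y j"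
    and comm: "\<And>a. a \<in> topspace A \<Longrightarrow> f (i a) = j (u a)"
    and b: "b \<in> topspace B" and N: "openin X N" and sub: "cluster_set A B u X i b \<subseteq> N"
  shows "\<exists>V. openin B V \<and> b \<in> V \<and> i ` {a \<in> topspace A. u a \<in> V} \<subseteq> N"
proof (rule ccontr)
  assume "\<not> ?thesis"
  then have "i ` {a \<in> topspace A. u a \<in> V} \<inter> (topspace X - N) \<noteq> {}" if "openin B V" "b \<in> V" for V
    using that continuous_map_image_subset_topspace[OF i] by blast
  moreover have "closedin X (topspace X - N)" using N by blast
  ultimately obtain x where "x \<in> topspace X - N" "x \<in> cluster_set A B u X i b"
    using cluster_set_meets_closedin[OF f i j comm b] by blast
  then show False using sub by blast
qed

lemma continuous_map_cluster_selection:
  assumes reg: "regular_space X" and f: "proper_map X Y f"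
    and i: "continuous_map A X i" and j: "continuous_map B Y j"
    and comm: "\<And>a. a \<in> topspace A \<Longrightarrow> f (i a) = j (u a)"
    and h: "\<And>b. b \<in> topspace B \<Longrightarrow> h b \<in> cluster_set A B u X i b"
    and unique: "\<And>b x. b \<in> topspace B \<Longrightarrow> x \<in> cluster_set A B u X i b \<Longrightarrow> x = h b"
  shows "continuous_map B X h"
  unfolding continuous_map_def
proof (intro conjI allI impI)
  show "h \<in> topspace B \<rightarrow> topspace X" using h by (auto simp: cluster_set_def)
  fix G assume G: "openin X G"
  show "openin B {b \<in> topspace B. h b \<in> G}"
  proof (subst openin_subopen, intro ballI)
    fix b assume "b \<in> {b \<in> topspace B. h b \<in> G}"
    then have b: "b \<in> topspace B" and hb: "h b \<in> G" by auto
    have "neighbourhood_base_of (closedin X) X" using reg by (simp add: neighbourhood_base_of_closedin)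
    then obtain N K where N: "openin X N" "closedin X K" "h b \<in> N" "N \<subseteq> K" "K \<subseteq> G"
      using G hb unfolding neighbourhood_base_of by meson
    obtain V where V: "openin B V" "b \<in> V" and VN: "i ` {a \<in> topspace A. u a \<in> V} \<subseteq> N"
      using cluster_set_subset_openin_imp_eventually[OF f i j comm b N(1)] unique[OF b] N(3) by blast
    have "h b' \<in> G" if "b' \<in> V" for b'
    proof -
      have "b' \<in> topspace B" using openin_subset[OF V(1)] that by blast
      then have "h b' \<in> X closure_of (i ` {a \<in> topspace A. u a \<in> V})"
        using h V(1) that by (auto simp: cluster_set_def)
      also have "\<dots> \<subseteq> K" using VN N(4) N(2) by (meson closure_of_minimal order_trans)
      finally show ?thesis using N(5) by blast
    qed
    then show "\<exists>V. openin B V \<and> b \<in> V \<and> V \<subseteq> {b \<in> topspace B. h b \<in> G}"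
      using V openin_subset[OF V(1)] by blast
  qed
qed

lemma lifts_if_proper_map:
  assumes reg: "regular_space X" and T2: "Hausdorff_space X" and f: "proper_map X Y f"
    and u: "in_Cr5l A B u"
  shows "lifts A B u X Y f"
  unfolding lifts_def
proof (intro allI impI, elim conjE)
  fix i j assume i: "continuous_map A X i" and j: "continuous_map B Y j"
    and "\<forall>a\<in>topspace A. f (i a) = j (u a)"
  then have comm: "\<And>a. a \<in> topspace A \<Longrightarrow> f (i a) = j (u a)" by blast
  have ex: "\<exists>x. x \<in> cluster_set A B u X i b \<and> f x = j b" if b: "b \<in> topspace B" for b
  proof -
    have "i ` {a \<in> topspace A. u a \<in> V} \<inter> topspace X \<noteq> {}" if "openin B V" "b \<in> V" for V
      using in_Cr5l_dense_image[OF u that] continuous_map_image_subset_topspace[OF i] by blast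
    then show ?thesis using cluster_set_meets_closedin[OF f i j comm b closedin_topspace] by blast
  qed
  define h where "h b = (SOME x. x \<in> cluster_set A B u X i b \<and> f x = j b)" for b
  have h: "h b \<in> cluster_set A B u X i b" "f (h b) = j b" if "b \<in> topspace B" for b
    using someI_ex[OF ex[OF that]] unfolding h_def by blast+
  have unique: "x = h b" if "b \<in> topspace B" "x \<in> cluster_set A B u X i b" for b x
    using cluster_set_subsingleton[OF reg T2 u i] h(1) that by blast
  have "continuous_map B X h"
    using reg f i j comm h(1) unique by (rule continuous_map_cluster_selection) auto
  moreover have "h (u a) = i a" if "a \<in> topspace A" for a
  proof -
    have "u a \<in> topspace B"
      using u that unfolding in_Cr5l_def by (auto simp: continuous_map_def)
    then show ?thesis using unique image_in_cluster_set[OF i that, of B u] by simp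
  qed
  ultimately show "\<exists>h. continuous_map B X h \<and> (\<forall>a\<in>topspace A. h (u a) = i a) \<and>
      (\<forall>b\<in>topspace B. f (h b) = j b)"
    using h(2) by blast
qed

lemma in_P_if_proper_map:
  assumes "regular_space X" "Hausdorff_space X" "continuous_map X Y f" "proper_map X Y f"
  shows "in_P TYPE('c) X Y f"
  unfolding in_P_def using assms lifts_if_proper_map by blast

lemma proper_map_to_star_space_iff: "proper_map K star_space (\<lambda>_. ()) \<longleftrightarrow> compact_space K"
  by (simp add: proper_map_def closed_map_def star_space_def compact_space_def)

theorem claim1:
  fixes X :: "'a topology" and Y :: "'b topology" and f :: "'a \<Rightarrow> 'b"
    and K :: "'k topology"
  shows
   "(normal_space X \<and> Hausdorff_space X \<and> normal_space Y \<and> Hausdorff_space Y \<and>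
      continuous_map X Y f \<longrightarrow>
      (in_P TYPE(('a + 'b + nat) set set) X Y f \<longrightarrow> proper_map X Y f) \<and>
      (proper_map X Y f \<longrightarrow> in_P TYPE('c) X Y f))
    \<and>
    (Hausdorff_space K \<longrightarrow>
      (in_P TYPE(('k + nat) set set) K star_space (\<lambda>_. ()) \<longrightarrow> compact_space K) \<and>
      (compact_space K \<longrightarrow> in_P TYPE('d) K star_space (\<lambda>_. ())))"
proof (intro conjI impI; (elim conjE)?)
  assume "continuous_map X Y f" "in_P TYPE(('a + 'b + nat) set set) X Y f"
  then show "proper_map X Y f"
    using proper_map_if_lifts_ultrafilter_limits lifts_ultrafilter_limits_if_in_P by blast
next
  assume "normal_space X" "Hausdorff_space X" "continuous_map X Y f" "proper_map X Y f"
  moreover from this have "regular_space X"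
    using normal_t1_imp_regular_space Hausdorff_imp_t1_space by blast
  ultimately show "in_P TYPE('c) X Y f" using in_P_if_proper_map by blast
next
  have "continuous_map K star_space (\<lambda>_. ())" by (simp add: star_space_def)
  moreover assume "in_P TYPE(('k + nat) set set) K star_space (\<lambda>_. ())"
  ultimately show "compact_space K"
    using proper_map_if_lifts_ultrafilter_limits lifts_ultrafilter_limits_if_in_P
      proper_map_to_star_space_iff by blast
next
  assume "Hausdorff_space K" "compact_space K"
  moreover from this have "regular_space K" by (rule compact_Hausdorff_imp_regular_space[rotated])
  moreover have "continuous_map K star_space (\<lambda>_. ())" by (simp add: star_space_def)
  ultimately show "in_P TYPE('d) K star_space (\<lambda>_. ())"
    using in_P_if_proper_map proper_map_to_star_space_iff by blast
qed

end
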